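(* (i) Let $X$ be a separable real Banach space with property (au), and let $(x_n)_{n\ge1}$ be a weakly null sequence in $X$ which does not converge to $0$ in norm. Then for every $\delta>0$ there is a subsequence $(y_n)_{n\ge1}$ of $(x_n)$ which is a $(1+\delta)$-unconditional basic sequence, i.e. $\|\sum_{j=1}^n\epsilon_ja_jy_j\|\le(1+\delta)\|\sum_{j=1}^na_jy_j\|$ for all $n$, all scalars $a_j$ and all signs $\epsilon_j=\pm1$. (ii) Let $X$ be a separable real Banach space with property (au$^*$), and let $(x_n^* )_{n\ge1}$ be a weak$^*$-null sequence in $X^*$ which does not converge to $0$ in norm. Then for every $\delta>0$ there is a subsequence $(y_n^* )$ of $(x_n^* )$ which is a $(1+\delta)$-unconditional basic sequence.
   Context: All Banach spaces are real. A separable Banach space $X$ has property (au) if for every $x\in X$ and $\delta>0$ there is a closed subspace $W\subseteq X$ of finite codimension such that $\|x-w\|\le(1+\delta)\|x+w\|$ for all $w\in W$. A separable Banach space $X$ has property (au$^*$) if $\lim_{n\to\infty}(\|x^*+x_n^*\|-\|x^*-x_n^*\|)=0$ whenever $x^*\in X^*$ and $(x_n^* )_{n\ge1}$ is a weak$^*$-null sequence in $X^*$. *)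

theory Defs
  imports "HOL-Analysis.Analysis"
begin

text \<open>Real Banach spaces are modelled by the type class banach; the dual X* is the type
  of bounded linear functionals (blinfun to real) with the operator norm.\<close>

definition separable_type :: "'a::metric_space itself \<Rightarrow> bool" where
  "separable_type _ \<longleftrightarrow> (\<exists>D::'a set. countable D \<and> closure D = UNIV)"

definition finite_codim :: "'a::real_vector set \<Rightarrow> bool" where
  "finite_codim W \<longleftrightarrow> (\<exists>F. finite F \<and> span (W \<union> F) = UNIV)"

definition property_au :: "'a::real_normed_vector itself \<Rightarrow> bool" where
  "property_au _ \<longleftrightarrow>
     (\<forall>(x::'a) \<delta>. \<delta> > 0 \<longrightarrow>
        (\<exists>W. subspace W \<and> closed W \<and> finite_codim W \<and>
             (\<forall>w\<in>W. norm (x - w) \<le> (1 + \<delta>) * norm (x + w))))"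

definition weak_star_null :: "(nat \<Rightarrow> ('a::real_normed_vector \<Rightarrow>\<^sub>L real)) \<Rightarrow> bool" where
  "weak_star_null f \<longleftrightarrow> (\<forall>x. (\<lambda>n. blinfun_apply (f n) x) \<longlonglongrightarrow> 0)"

definition weakly_null :: "(nat \<Rightarrow> 'a::real_normed_vector) \<Rightarrow> bool" where
  "weakly_null x \<longleftrightarrow> (\<forall>f::'a \<Rightarrow>\<^sub>L real. (\<lambda>n. blinfun_apply f (x n)) \<longlonglongrightarrow> 0)"

definition property_au_star :: "'a::real_normed_vector itself \<Rightarrow> bool" where
  "property_au_star _ \<longleftrightarrow>
     (\<forall>(g::'a \<Rightarrow>\<^sub>L real) f. weak_star_null f \<longrightarrow>
        (\<lambda>n. norm (g + f n) - norm (g - f n)) \<longlonglongrightarrow> 0)"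

text \<open>C-unconditional basic sequence: nonzero terms and the unconditional estimate
  (which together imply being a basic sequence).\<close>
definition unconditional_basic :: "real \<Rightarrow> (nat \<Rightarrow> 'a::real_normed_vector) \<Rightarrow> bool" where
  "unconditional_basic C y \<longleftrightarrow> (\<forall>n. y n \<noteq> 0) \<and>
     (\<forall>n (a::nat \<Rightarrow> real) (\<epsilon>::nat \<Rightarrow> real). (\<forall>j. \<epsilon> j \<in> {-1, 1}) \<longrightarrow>
        norm (\<Sum>j<n. (\<epsilon> j * a j) *\<^sub>R y j) \<le> C * norm (\<Sum>j<n. a j *\<^sub>R y j))"

end

theory Submission
  imports Defs
begin

(* Both parts are reduced to one statement about a sequence z in a normed space.  Call z
   au-controlled if for every unit vector g and theta > 0 there is a seminorm p with p(z m) -> 0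
   such that every bounded h with p h <= 1 is theta-close to some h0 with
   |g - h0| <= (1 + theta) |g + h0|.  Property (au) gives this with p a multiple of the distance
   to a finite-codimensional subspace, which weakly null sequences approach because that distance
   is dominated by finitely many functionals; property au* together with separability gives it
   with p h = n * sum_{i<n} |h (d i)| for a dense sequence d.

   The abstract statement is a gliding-hump argument.  Compactness makes the seminorms work
   uniformly on the unit vectors spanned by the first k chosen terms with bounded coefficients;
   a diagonal choice makes later terms tiny for all earlier seminorms; a double induction shows
   that flipping the sign of the tail of any finite sum at position k costs a factor of at most
   1 + theta k; and a telescoping product of these factors bounds every choice of signs by
   1 + delta. *)

(* Seminorms on a real vector space.  They play the role of the finitely many functionals in
   the classical gliding-hump argument: a vector is negligible when a seminorm is small on it. *)
definition seminorm :: "('v::real_vector \<Rightarrow> real) \<Rightarrow> bool" where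
  "seminorm p \<longleftrightarrow> (\<forall>u. 0 \<le> p u) \<and> (\<forall>u v. p (u + v) \<le> p u + p v) \<and>
     (\<forall>t u. p (t *\<^sub>R u) \<le> \<bar>t\<bar> * p u)"

lemma seminorm_nonneg: "seminorm p \<Longrightarrow> 0 \<le> p u"
  by (simp add: seminorm_def)

lemma seminorm_scale: "seminorm p \<Longrightarrow> p (t *\<^sub>R u) \<le> \<bar>t\<bar> * p u"
  by (simp add: seminorm_def)

lemma seminorm_const_mult:
  assumes "seminorm p" "0 \<le> k"
  shows "seminorm (\<lambda>u. k * p u)"
proof -
  have "k * p (u + v) \<le> k * p u + k * p v" for u v
    using assms mult_left_mono[of "p (u + v)" "p u + p v" k] by (simp add: seminorm_def distrib_left)
  moreover have "k * p (t *\<^sub>R u) \<le> \<bar>t\<bar> * (k * p u)" for t u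
    using assms mult_left_mono[OF seminorm_scale[OF assms(1)], of k t u] by (simp add: mult_ac)
  ultimately show ?thesis using assms by (simp add: seminorm_def)
qed

lemma seminorm_sum:
  assumes "finite T" "\<And>t. t \<in> T \<Longrightarrow> seminorm (q t)"
  shows "seminorm (\<lambda>u. \<Sum>t\<in>T. q t u)"
proof -
  have "0 \<le> (\<Sum>t\<in>T. q t u)" for u
    using assms by (auto simp: seminorm_def intro: sum_nonneg)
  moreover have "(\<Sum>t\<in>T. q t (u + v)) \<le> (\<Sum>t\<in>T. q t u) + (\<Sum>t\<in>T. q t v)" for u v
    unfolding sum.distrib[symmetric] using assms by (auto simp: seminorm_def intro!: sum_mono)
  moreover have "(\<Sum>t\<in>T. q t (c *\<^sub>R u)) \<le> \<bar>c\<bar> * (\<Sum>t\<in>T. q t u)" for c u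
    unfolding sum_distrib_left using assms by (auto simp: seminorm_def intro!: sum_mono)
  ultimately show ?thesis by (simp add: seminorm_def)
qed

lemma seminorm_abs_apply: "seminorm (\<lambda>h :: 'b::real_normed_vector \<Rightarrow>\<^sub>L real. \<bar>h v\<bar>)"
  by (simp add: seminorm_def abs_triangle_ineq plus_blinfun.rep_eq scaleR_blinfun.rep_eq abs_mult)

lemma seminorm_lincomb_le:
  assumes "seminorm p" "finite A"
  shows "p (\<Sum>i\<in>A. b i *\<^sub>R y i) \<le> (\<Sum>i\<in>A. \<bar>b i\<bar> * p (y i))"
  using assms(2)
proof (induction A rule: finite_induct)
  case empty
  show ?case using seminorm_scale[OF assms(1), of 0 0] by simp
next
  case (insert x F)
  have "p (\<Sum>i\<in>insert x F. b i *\<^sub>R y i) \<le> p (b x *\<^sub>R y x) + p (\<Sum>i\<in>F. b i *\<^sub>R y i)"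
    using insert assms(1) by (simp add: seminorm_def)
  also have "\<dots> \<le> \<bar>b x\<bar> * p (y x) + (\<Sum>i\<in>F. \<bar>b i\<bar> * p (y i))"
    using insert seminorm_scale[OF assms(1)] by (meson add_mono)
  finally show ?case using insert by simp
qed

lemma infdist_less_obtain:
  assumes "A \<noteq> {}" "infdist x A < e"
  obtains a where "a \<in> A" "dist x a < e"
proof -
  have "bdd_below ((\<lambda>a. dist x a) ` A)" by (rule bdd_belowI[of _ 0]) auto
  thus ?thesis using assms that by (auto simp: infdist_notempty cINF_less_iff)
qed

lemma infdist_geI:
  assumes "A \<noteq> {}" "\<And>a. a \<in> A \<Longrightarrow> c \<le> dist x a"
  shows "c \<le> infdist x A"
  using assms by (simp add: infdist_notempty cINF_greatest)

lemma infdist_subspace_add: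
  fixes W :: "'v::real_normed_vector set"
  assumes W: "subspace W"
  shows "infdist (u + v) W \<le> infdist u W + infdist v W"
proof -
  have Wne: "W \<noteq> {}" using W subspace_0 by blast
  have "infdist (u + v) W - dist v w2 \<le> infdist u W" if w2: "w2 \<in> W" for w2
  proof (rule infdist_geI[OF Wne])
    fix w1 assume w1: "w1 \<in> W"
    have "infdist (u + v) W \<le> dist (u + v) (w1 + w2)"
      using subspace_add[OF W w1 w2] by (rule infdist_le)
    also have "\<dots> \<le> dist u w1 + dist v w2"
      unfolding dist_norm using norm_triangle_ineq[of "u - w1" "v - w2"] by (simp add: algebra_simps)
    finally show "infdist (u + v) W - dist v w2 \<le> dist u w1" by simp
  qed
  hence "infdist (u + v) W - infdist u W \<le> infdist v W"
    by (intro infdist_geI[OF Wne]) force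
  thus ?thesis by simp
qed

lemma infdist_subspace_scale:
  fixes W :: "'v::real_normed_vector set"
  assumes W: "subspace W"
  shows "infdist (t *\<^sub>R u) W \<le> \<bar>t\<bar> * infdist u W"
proof (cases "t = 0")
  case True
  thus ?thesis using subspace_0[OF W] by simp
next
  case False
  have Wne: "W \<noteq> {}" using W subspace_0 by blast
  have "infdist (t *\<^sub>R u) W / \<bar>t\<bar> \<le> infdist u W"
  proof (rule infdist_geI[OF Wne])
    fix w assume "w \<in> W"
    hence "infdist (t *\<^sub>R u) W \<le> dist (t *\<^sub>R u) (t *\<^sub>R w)"
      by (intro infdist_le subspace_scale[OF W])
    also have "\<dots> = \<bar>t\<bar> * dist u w"
      unfolding dist_norm by (simp add: scaleR_diff_right[symmetric])
    finally show "infdist (t *\<^sub>R u) W / \<bar>t\<bar> \<le> dist u w" using False by (simp add: field_simps)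
  qed
  thus ?thesis using False by (simp add: field_simps)
qed

lemma seminorm_infdist:
  fixes W :: "'v::real_normed_vector set"
  assumes "subspace W"
  shows "seminorm (\<lambda>h. infdist h W)"
  using infdist_subspace_add[OF assms] infdist_subspace_scale[OF assms]
  by (simp add: seminorm_def infdist_nonneg)

lemma coord_bound:
  fixes S :: "'v::real_normed_vector set"
  assumes S: "closed S" "subspace S" and f: "f \<notin> S"
  shows "0 < infdist f S" "\<And>s t. s \<in> S \<Longrightarrow> \<bar>t\<bar> * infdist f S \<le> norm (s + t *\<^sub>R f)"
proof -
  show "0 < infdist f S"
    using infdist_pos_not_in_closed[OF S(1) _ f] subspace_0[OF S(2)] by blast
  fix s t assume s: "s \<in> S"
  show "\<bar>t\<bar> * infdist f S \<le> norm (s + t *\<^sub>R f)"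
  proof (cases "t = 0")
    case True thus ?thesis by simp
  next
    case False
    have "- (1/t) *\<^sub>R s \<in> S" using S(2) s by (simp add: subspace_neg subspace_scale)
    hence "infdist f S \<le> dist f (- (1/t) *\<^sub>R s)" by (rule infdist_le)
    hence "infdist f S \<le> norm (f + (1/t) *\<^sub>R s)" by (simp add: dist_norm)
    hence "\<bar>t\<bar> * infdist f S \<le> norm (t *\<^sub>R (f + (1/t) *\<^sub>R s))"
      by (simp add: mult_left_mono)
    also have "t *\<^sub>R (f + (1/t) *\<^sub>R s) = s + t *\<^sub>R f" using False by (simp add: algebra_simps)
    finally show ?thesis .
  qed
qed

(* Adjoining one vector to a closed subspace keeps it closed (no completeness needed:
   the coefficients of f form a Cauchy sequence of reals by coord_bound). *)
lemma closed_span_insert: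
  fixes S :: "'v::real_normed_vector set"
  assumes S: "closed S" "subspace S"
  shows "closed (span (insert f S))"
proof (cases "f \<in> S")
  case True
  have "span (insert f S) = span S" by (rule span_redundant) (rule span_base[OF True])
  also have "\<dots> = S" using S(2) by (rule span_eq_iff[THEN iffD2])
  finally show ?thesis using S(1) by (simp only:)
next
  case False
  define d where "d = infdist f S"
  have d0: "0 < d" and B: "\<And>s t. s \<in> S \<Longrightarrow> \<bar>t\<bar> * d \<le> norm (s + t *\<^sub>R f)"
    using coord_bound[OF S False] by (auto simp: d_def)
  have spS: "span S = S" using S by simp
  show ?thesis
    unfolding closed_sequential_limits
  proof (intro allI impI)
    fix u :: "nat \<Rightarrow> 'v" and l assume ul: "(\<forall>n. u n \<in> span (insert f S)) \<and> u \<longlonglongrightarrow> l"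
    hence "\<forall>n. \<exists>k. u n - k *\<^sub>R f \<in> S" by (simp add: span_insert spS)
    then obtain t where t: "\<And>n. u n - t n *\<^sub>R f \<in> S" by metis
    have "Cauchy u" using ul LIMSEQ_imp_Cauchy by blast
    have "Cauchy t"
    proof (rule CauchyI)
      fix e :: real assume e: "0 < e"
      obtain M where M: "\<forall>m\<ge>M. \<forall>n\<ge>M. norm (u m - u n) < e * d"
        using CauchyD[OF \<open>Cauchy u\<close>, of "e * d"] e d0 by auto
      show "\<exists>M. \<forall>m\<ge>M. \<forall>n\<ge>M. norm (t m - t n) < e"
      proof (intro exI allI impI)
        fix m n assume mn: "M \<le> m" "M \<le> n"
        have "\<bar>t m - t n\<bar> * d \<le> norm (((u m - t m *\<^sub>R f) - (u n - t n *\<^sub>R f)) + (t m - t n) *\<^sub>R f)"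
          by (rule B[OF subspace_diff[OF S(2) t t]])
        also have "((u m - t m *\<^sub>R f) - (u n - t n *\<^sub>R f)) + (t m - t n) *\<^sub>R f = u m - u n"
          by (simp add: algebra_simps)
        finally have "\<bar>t m - t n\<bar> * d < e * d" using M mn by fastforce
        thus "norm (t m - t n) < e" using d0 by simp
      qed
    qed
    then obtain \<tau> where "t \<longlonglongrightarrow> \<tau>" using Cauchy_convergent_iff convergent_def by blast
    hence "(\<lambda>n. u n - t n *\<^sub>R f) \<longlonglongrightarrow> l - \<tau> *\<^sub>R f"
      using ul by (intro tendsto_intros) auto
    hence "l - \<tau> *\<^sub>R f \<in> S" by (rule closed_sequentially[OF S(1) t])
    thus "l \<in> span (insert f S)" by (auto simp: span_insert spS)
  qed
qed

lemma closed_span_finite: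
  fixes W :: "'v::real_normed_vector set"
  assumes F: "finite F" and W: "closed W" "subspace W"
  shows "closed (span (W \<union> F))"
  using F
proof (induction F rule: finite_induct)
  case empty
  have "span W = W" using W(2) by (rule span_eq_iff[THEN iffD2])
  thus ?case using W by (simp del: span_eq_iff)
next
  case (insert f F)
  have "span (W \<union> insert f F) = span (insert f (span (W \<union> F)))"
    by (simp add: span_insert span_span)
  thus ?case using closed_span_insert[OF insert.IH subspace_span] by simp
qed

lemma coord_functional:
  fixes S :: "'v::real_normed_vector set"
  assumes S: "closed S" "subspace S" and f: "f \<notin> S" and U: "span (insert f S) = UNIV"
  obtains \<psi> :: "'v \<Rightarrow>\<^sub>L real" where "\<And>s. s \<in> S \<Longrightarrow> \<psi> s = 0" "\<psi> f = 1"
proof -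
  define d where "d = infdist f S"
  have d0: "0 < d" and B: "\<And>s t. s \<in> S \<Longrightarrow> \<bar>t\<bar> * d \<le> norm (s + t *\<^sub>R f)"
    using coord_bound[OF S f] by (auto simp: d_def)
  have spS: "span S = S" using S by simp
  have ex: "\<exists>t. x - t *\<^sub>R f \<in> S" for x
    using U by (auto simp: span_insert spS set_eq_iff)
  have uniq: "t = t'" if "x - t *\<^sub>R f \<in> S" "x - t' *\<^sub>R f \<in> S" for x t t'
  proof (rule ccontr)
    assume ne: "t \<noteq> t'"
    have "(x - t *\<^sub>R f) - (x - t' *\<^sub>R f) = (t' - t) *\<^sub>R f" by (simp add: algebra_simps)
    hence "(t' - t) *\<^sub>R f \<in> S" using subspace_diff[OF S(2) that] by simp
    hence "(1 / (t' - t)) *\<^sub>R ((t' - t) *\<^sub>R f) \<in> S" by (rule subspace_scale[OF S(2)])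
    thus False using ne f by simp
  qed
  define \<psi> where "\<psi> x = (THE t. x - t *\<^sub>R f \<in> S)" for x
  have psi: "x - \<psi> x *\<^sub>R f \<in> S" for x
    unfolding \<psi>_def by (rule theI') (use ex uniq in blast)
  have psi_eq: "\<psi> x = t" if "x - t *\<^sub>R f \<in> S" for x t
    using uniq[OF psi that] .
  have "bounded_linear \<psi>"
  proof (rule bounded_linear_intro[where K = "1/d"])
    fix x y
    have "(x + y) - (\<psi> x + \<psi> y) *\<^sub>R f = (x - \<psi> x *\<^sub>R f) + (y - \<psi> y *\<^sub>R f)"
      by (simp add: algebra_simps)
    thus "\<psi> (x + y) = \<psi> x + \<psi> y" using subspace_add[OF S(2) psi psi] psi_eq by metis
  next
    fix r x
    have "r *\<^sub>R x - (r * \<psi> x) *\<^sub>R f = r *\<^sub>R (x - \<psi> x *\<^sub>R f)" by (simp add: algebra_simps)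
    thus "\<psi> (r *\<^sub>R x) = r *\<^sub>R \<psi> x" using subspace_scale[OF S(2) psi] psi_eq by simp
  next
    fix x
    have "\<bar>\<psi> x\<bar> * d \<le> norm ((x - \<psi> x *\<^sub>R f) + \<psi> x *\<^sub>R f)" by (rule B[OF psi])
    thus "norm (\<psi> x) \<le> norm x * (1/d)" using d0 by (simp add: field_simps)
  qed
  moreover have "\<psi> s = 0" if "s \<in> S" for s using psi_eq[of s 0] that by simp
  moreover have "\<psi> f = 1" using psi_eq[of f 1] S(2) by (simp add: subspace_0)
  ultimately show ?thesis using that[of "Blinfun \<psi>"] by (simp add: bounded_linear_Blinfun_apply)
qed

lemma infdist_insert_functional:
  fixes W :: "'v::real_normed_vector set" and \<psi> :: "'v \<Rightarrow>\<^sub>L real"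
  assumes W: "subspace W" and psiW: "\<And>w. w \<in> W \<Longrightarrow> \<psi> w = 0" and psif: "\<psi> f = 1"
  shows "infdist x W \<le> (1 + norm \<psi> * norm f) * infdist x (span (insert f W)) + norm f * \<bar>\<psi> x\<bar>"
proof -
  define K where "K = norm \<psi> * norm f"
  have K0: "0 \<le> K" by (simp add: K_def)
  have W1ne: "span (insert f W) \<noteq> {}" using span_zero by blast
  have "(infdist x W - norm f * \<bar>\<psi> x\<bar>) / (1 + K) \<le> infdist x (span (insert f W))"
  proof (rule infdist_geI[OF W1ne])
    fix w1 assume "w1 \<in> span (insert f W)"
    moreover have "span W = W" using W by (rule span_eq_iff[THEN iffD2])
    ultimately obtain t where t: "w1 - t *\<^sub>R f \<in> W" by (auto simp: span_insert)
    have "\<psi> w1 = t"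
      using psiW[OF t] psif by (simp add: blinfun.diff_right blinfun.scaleR_right)
    hence "\<bar>t\<bar> \<le> \<bar>\<psi> x\<bar> + \<bar>\<psi> (w1 - x)\<bar>"
      by (simp add: blinfun.diff_right)
    also have "\<bar>\<psi> (w1 - x)\<bar> \<le> norm \<psi> * dist x w1"
      using norm_blinfun[of \<psi> "w1 - x"] by (simp add: dist_norm norm_minus_commute)
    finally have "\<bar>t\<bar> * norm f \<le> (\<bar>\<psi> x\<bar> + norm \<psi> * dist x w1) * norm f"
      by (intro mult_right_mono) auto
    moreover have "infdist x W \<le> dist x w1 + \<bar>t\<bar> * norm f"
    proof -
      have "infdist x W \<le> dist x (w1 - t *\<^sub>R f)" using t by (rule infdist_le)
      also have "\<dots> = norm ((x - w1) + t *\<^sub>R f)" by (simp add: dist_norm algebra_simps)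
      also have "\<dots> \<le> dist x w1 + \<bar>t\<bar> * norm f"
        using norm_triangle_ineq[of "x - w1" "t *\<^sub>R f"] by (simp add: dist_norm)
      finally show ?thesis .
    qed
    ultimately have "infdist x W - norm f * \<bar>\<psi> x\<bar> \<le> (1 + K) * dist x w1"
      by (simp add: K_def algebra_simps)
    thus "(infdist x W - norm f * \<bar>\<psi> x\<bar>) / (1 + K) \<le> dist x w1"
      using K0 by (simp add: divide_le_eq mult.commute)
  qed
  moreover have "0 < 1 + K" using K0 by simp
  ultimately show ?thesis by (simp add: pos_divide_le_eq K_def mult.commute)
qed

lemma infdist_control_insert:
  fixes W :: "'v::real_normed_vector set" and \<psi> :: "'v \<Rightarrow>\<^sub>L real"
  assumes W: "subspace W" and psiW: "\<And>w. w \<in> W \<Longrightarrow> \<psi> w = 0" and psif: "\<psi> f = 1"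
    and C1: "0 \<le> C1" "finite \<Phi>1"
      "\<And>x. infdist x (span (insert f W)) \<le> C1 * (\<Sum>\<phi>\<in>\<Phi>1. \<bar>blinfun_apply \<phi> x\<bar>)"
  shows "infdist x W \<le> ((1 + norm \<psi> * norm f) * C1 + norm f) * (\<Sum>\<phi>\<in>insert \<psi> \<Phi>1. \<bar>blinfun_apply \<phi> x\<bar>)"
proof -
  have s1: "(\<Sum>\<phi>\<in>\<Phi>1. \<bar>blinfun_apply \<phi> x\<bar>) \<le> (\<Sum>\<phi>\<in>insert \<psi> \<Phi>1. \<bar>blinfun_apply \<phi> x\<bar>)"
    by (rule sum_mono2) (use C1 in auto)
  have s2: "\<bar>\<psi> x\<bar> \<le> (\<Sum>\<phi>\<in>insert \<psi> \<Phi>1. \<bar>blinfun_apply \<phi> x\<bar>)"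
    by (rule member_le_sum) (use C1 in auto)
  have "infdist x W \<le> (1 + norm \<psi> * norm f) * infdist x (span (insert f W)) + norm f * \<bar>\<psi> x\<bar>"
    by (rule infdist_insert_functional[OF W psiW psif])
  also have "\<dots> \<le> (1 + norm \<psi> * norm f) * (C1 * (\<Sum>\<phi>\<in>insert \<psi> \<Phi>1. \<bar>blinfun_apply \<phi> x\<bar>))
                 + norm f * (\<Sum>\<phi>\<in>insert \<psi> \<Phi>1. \<bar>blinfun_apply \<phi> x\<bar>)"
    using s2 order_trans[OF C1(3) mult_left_mono[OF s1 C1(1)]]
    by (intro add_mono mult_left_mono) auto
  finally show ?thesis by (simp add: algebra_simps)
qed

lemma codim_functionals:
  fixes W :: "'v::real_normed_vector set"
  assumes "finite F" "closed W" "subspace W" "span (W \<union> F) = UNIV"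
  obtains \<Phi> :: "('v \<Rightarrow>\<^sub>L real) set" and C where "0 \<le> C" "finite \<Phi>"
    "\<And>x. infdist x W \<le> C * (\<Sum>\<phi>\<in>\<Phi>. \<bar>blinfun_apply \<phi> x\<bar>)"
  using assms
proof (induction F arbitrary: W thesis rule: finite_induct)
  case empty
  moreover have "span W = W" using empty(3) by (rule span_eq_iff[THEN iffD2])
  ultimately have "W = UNIV" by simp
  thus ?case using empty(1)[of 0 "{}"] by simp
next
  case (insert f F)
  define S where "S = span (W \<union> F)"
  have cS: "closed S"
    unfolding S_def by (rule closed_span_finite[OF insert.hyps(1) insert.prems(2,3)])
  have sS: "subspace S" unfolding S_def by (rule subspace_span)
  have US: "span (insert f S) = UNIV" using insert.prems(4) by (simp add: S_def span_insert span_span)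
  show ?case
  proof (cases "f \<in> S")
    case True
    have "span (insert f S) = span S" by (rule span_redundant) (rule span_base[OF True])
    also have "\<dots> = S" unfolding S_def by (rule span_span)
    finally have "span (W \<union> F) = UNIV" using US by (simp only: S_def)
    from insert.IH[OF insert.prems(1,2,3) this] show ?thesis .
  next
    case False
    obtain \<psi> :: "'v \<Rightarrow>\<^sub>L real" where psiS: "\<And>s. s \<in> S \<Longrightarrow> \<psi> s = 0" and psif: "\<psi> f = 1"
      using coord_functional[OF cS sS False US] unfolding S_def by blast
    have psiW: "\<psi> w = 0" if "w \<in> W" for w
      using psiS that span_superset unfolding S_def by blast
    define W1 where "W1 = span (insert f W)"
    have "span (W \<union> insert f F) \<subseteq> span (W1 \<union> F)"
      unfolding W1_def by (intro span_mono) (use span_superset[of "insert f W"] in blast)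
    hence U1: "span (W1 \<union> F) = UNIV" using insert.prems(4) by blast
    have cW1: "closed W1" unfolding W1_def by (rule closed_span_insert[OF insert.prems(2,3)])
    have sW1: "subspace W1" unfolding W1_def by (rule subspace_span)
    obtain \<Phi>1 C1 where C1: "0 \<le> C1" "finite \<Phi>1"
        "\<And>x. infdist x W1 \<le> C1 * (\<Sum>\<phi>\<in>\<Phi>1. \<bar>blinfun_apply \<phi> x\<bar>)"
      using insert.IH[OF _ cW1 sW1 U1] by blast
    have "0 \<le> (1 + norm \<psi> * norm f) * C1 + norm f" using C1 by simp
    thus ?thesis
      by (rule insert.prems(1)[OF _ _ infdist_control_insert[OF insert.prems(3) psiW psif C1[unfolded W1_def]]])
        (use C1 in simp)
  qed
qed

lemma weakly_null_infdist:
  fixes x :: "nat \<Rightarrow> 'v::real_normed_vector"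
  assumes x: "weakly_null x" and W: "closed W" "subspace W" "finite_codim W"
  shows "(\<lambda>m. infdist (x m) W) \<longlonglongrightarrow> 0"
proof -
  obtain F where F: "finite F" "span (W \<union> F) = UNIV"
    using W(3) unfolding finite_codim_def by blast
  obtain C and \<Phi> :: "('v \<Rightarrow>\<^sub>L real) set" where C: "0 \<le> C" "finite \<Phi>"
    "\<And>y. infdist y W \<le> C * (\<Sum>\<phi>\<in>\<Phi>. \<bar>blinfun_apply \<phi> y\<bar>)"
    by (rule codim_functionals[OF F(1) W(1,2) F(2)]) auto
  have "(\<lambda>m. \<bar>blinfun_apply \<phi> (x m)\<bar>) \<longlonglongrightarrow> 0" for \<phi> :: "'v \<Rightarrow>\<^sub>L real"
  proof -
    have "(\<lambda>m. blinfun_apply \<phi> (x m)) \<longlonglongrightarrow> 0" using x unfolding weakly_null_def by blast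
    thus ?thesis by (rule tendsto_rabs_zero)
  qed
  hence "(\<lambda>m. \<Sum>\<phi>\<in>\<Phi>. \<bar>blinfun_apply \<phi> (x m)\<bar>) \<longlonglongrightarrow> (\<Sum>\<phi>\<in>\<Phi>. 0)"
    by (intro tendsto_sum)
  hence "(\<lambda>m. C * (\<Sum>\<phi>\<in>\<Phi>. \<bar>blinfun_apply \<phi> (x m)\<bar>)) \<longlonglongrightarrow> 0"
    by (simp add: tendsto_mult_right_zero)
  moreover have "\<forall>m. norm (infdist (x m) W) \<le> C * (\<Sum>\<phi>\<in>\<Phi>. \<bar>blinfun_apply \<phi> (x m)\<bar>)"
    using C(3) by (simp add: infdist_nonneg)
  ultimately show ?thesis by (rule Lim_null_comparison[OF always_eventually, rotated])
qed

lemma separable_type_dense_seq: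
  assumes "separable_type TYPE('a)"
  obtains d :: "nat \<Rightarrow> 'a::metric_space" where "closure (range d) = UNIV"
proof -
  obtain D :: "'a set" where D: "countable D" "closure D = UNIV"
    using assms unfolding separable_type_def by blast
  hence "D \<noteq> {}" by auto
  hence "range (from_nat_into D) = D" using D(1) by (rule range_from_nat_into)
  thus ?thesis using D(2) by (intro that[of "from_nat_into D"]) simp
qed

lemma weak_star_null_from_dense:
  fixes hs :: "nat \<Rightarrow> ('b::real_normed_vector \<Rightarrow>\<^sub>L real)"
  assumes bdd: "\<And>n. norm (hs n) \<le> M" and dense: "closure (range d) = UNIV"
    and pointwise: "\<And>i. (\<lambda>n. hs n (d i)) \<longlonglongrightarrow> 0"
  shows "weak_star_null hs"
  unfolding weak_star_null_def
proof (intro allI tendstoI)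
  fix x :: 'b and e :: real assume e: "0 < e"
  have M0: "0 \<le> M" using bdd[of 0] norm_ge_zero[of "hs 0"] by linarith
  have "0 < e / (2 * (M + 1))" using e M0 by simp
  moreover have "x \<in> closure (range d)" using dense by simp
  ultimately obtain i where "dist (d i) x < e / (2 * (M + 1))"
    unfolding closure_approachable by blast
  hence i: "norm (x - d i) < e / (2 * (M + 1))" by (simp add: dist_norm norm_minus_commute)
  have close: "\<bar>hs n x - hs n (d i)\<bar> < e/2" for n
  proof -
    have "\<bar>hs n x - hs n (d i)\<bar> \<le> norm (hs n) * norm (x - d i)"
      using norm_blinfun[of "hs n" "x - d i"] by (simp add: blinfun.diff_right)
    also have "\<dots> \<le> M * (e / (2 * (M + 1)))"
      using bdd[of n] i M0 by (intro mult_mono) auto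
    also have "\<dots> < e/2" using M0 e by (simp add: field_simps)
    finally show ?thesis .
  qed
  have "eventually (\<lambda>n. dist (hs n (d i)) 0 < e/2) sequentially"
    using pointwise[of i] e by (intro tendstoD) auto
  thus "eventually (\<lambda>n. dist (hs n x) 0 < e) sequentially"
  proof (rule eventually_mono)
    fix n assume "dist (hs n (d i)) 0 < e/2"
    thus "dist (hs n x) 0 < e"
      using close[of n] abs_triangle_ineq[of "hs n x - hs n (d i)" "hs n (d i)"]
      by (simp add: dist_real_def)
  qed
qed

lemma weak_star_null_of_dense_sums:
  fixes hs :: "nat \<Rightarrow> ('b::real_normed_vector \<Rightarrow>\<^sub>L real)"
  assumes bdd: "\<And>n. norm (hs n) \<le> M" and dense: "closure (range d) = UNIV"
    and sums: "\<And>n. real n * (\<Sum>i<n. \<bar>hs n (d i)\<bar>) \<le> 1"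
  shows "weak_star_null hs"
proof (rule weak_star_null_from_dense[OF bdd dense])
  fix i
  have bound: "\<bar>hs n (d i)\<bar> \<le> 1 / real n" if "i < n" for n
  proof -
    have "\<bar>hs n (d i)\<bar> \<le> (\<Sum>i<n. \<bar>hs n (d i)\<bar>)"
      using that by (intro member_le_sum) auto
    hence "real n * \<bar>hs n (d i)\<bar> \<le> 1" using sums[of n] mult_left_mono[of _ _ "real n"] by force
    thus ?thesis using that by (simp add: field_simps)
  qed
  have "eventually (\<lambda>n. norm (hs n (d i)) \<le> 1 / real n) sequentially"
    using eventually_gt_at_top[of i] by (rule eventually_mono) (simp add: bound)
  thus "(\<lambda>n. hs n (d i)) \<longlonglongrightarrow> 0" by (rule Lim_null_comparison) (rule lim_1_over_n)
qed

lemma au_violation_gap: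
  fixes g h :: "'v::real_normed_vector"
  assumes g: "norm g = 1" and th: "0 < \<theta>" and bad: "(1 + \<theta>) * norm (g + h) < norm (g - h)"
  shows "min (\<theta>/2) 1 \<le> norm (g - h) - norm (g + h)"
proof -
  have "norm (2 *\<^sub>R g) \<le> norm (g + h) + norm (g - h)"
    using norm_triangle_ineq[of "g + h" "g - h"] by (simp add: scaleR_2)
  hence two: "2 \<le> norm (g + h) + norm (g - h)" using g by simp
  show ?thesis
  proof (cases "norm (g + h) \<ge> 1/2")
    case True
    hence "\<theta> * (1/2) \<le> \<theta> * norm (g + h)" using th by (intro mult_left_mono) auto
    thus ?thesis using bad by (simp add: algebra_simps min_def)
  next
    case False
    thus ?thesis using bad two th by (simp add: algebra_simps min_def)
  qed
qed

lemma property_au_star_estimate: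
  fixes hs :: "nat \<Rightarrow> ('b::real_normed_vector \<Rightarrow>\<^sub>L real)"
  assumes au: "property_au_star TYPE('b)" and hs: "weak_star_null hs"
    and g: "norm g = 1" and th: "0 < \<theta>"
  obtains n where "norm (g - hs n) \<le> (1 + \<theta>) * norm (g + hs n)"
proof (rule ccontr)
  assume "\<not> thesis"
  hence bad: "(1 + \<theta>) * norm (g + hs n) < norm (g - hs n)" for n using that by (meson not_le)
  have "(\<lambda>n. norm (g + hs n) - norm (g - hs n)) \<longlonglongrightarrow> 0"
    using au hs unfolding property_au_star_def by blast
  moreover have "0 < min (\<theta>/2) (1::real)" using th by simp
  ultimately have "eventually (\<lambda>n. dist (norm (g + hs n) - norm (g - hs n)) 0 < min (\<theta>/2) 1)
      sequentially" by (rule tendstoD)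
  then obtain n where "\<bar>norm (g + hs n) - norm (g - hs n)\<bar> < min (\<theta>/2) 1"
    by (auto simp: eventually_sequentially dist_real_def)
  thus False using au_violation_gap[OF g th bad[of n]] by linarith
qed

(* The abstract hypothesis shared by both parts of the theorem: for every unit vector g there are
   seminorms, tending to 0 along z, whose unit balls (intersected with a bounded set) consist of
   vectors theta-close to vectors h0 with |g - h0| <= (1 + theta)|g + h0|. *)
definition au_controlled :: "(nat \<Rightarrow> 'v::real_normed_vector) \<Rightarrow> bool" where
  "au_controlled z \<longleftrightarrow> (\<forall>\<theta>>0. \<forall>M. \<forall>g. norm g = 1 \<longrightarrow>
     (\<exists>p. seminorm p \<and> (\<lambda>m. p (z m)) \<longlonglongrightarrow> 0 \<and>
        (\<forall>h. norm h \<le> M \<longrightarrow> p h \<le> 1 \<longrightarrow>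
           (\<exists>h0. norm (h - h0) \<le> \<theta> \<and> norm (g - h0) \<le> (1 + \<theta>) * norm (g + h0)))))"

lemma au_controlled_subseq:
  fixes z :: "nat \<Rightarrow> 'v::real_normed_vector"
  assumes "au_controlled z" "strict_mono s"
  shows "au_controlled (z \<circ> s)"
  unfolding au_controlled_def
proof (intro allI impI)
  fix \<theta> :: real and M and g :: 'v assume "0 < \<theta>" "norm g = 1"
  then obtain p where p: "seminorm p" "(\<lambda>m. p (z m)) \<longlonglongrightarrow> 0"
    "\<forall>h. norm h \<le> M \<longrightarrow> p h \<le> 1 \<longrightarrow>
       (\<exists>h0. norm (h - h0) \<le> \<theta> \<and> norm (g - h0) \<le> (1 + \<theta>) * norm (g + h0))"
    using assms(1) unfolding au_controlled_def by blast
  moreover have "(\<lambda>m. p ((z \<circ> s) m)) \<longlonglongrightarrow> 0"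
    using LIMSEQ_subseq_LIMSEQ[OF p(2) assms(2)] by (simp add: comp_def)
  ultimately show "\<exists>p. seminorm p \<and> (\<lambda>m. p ((z \<circ> s) m)) \<longlonglongrightarrow> 0 \<and>
      (\<forall>h. norm h \<le> M \<longrightarrow> p h \<le> 1 \<longrightarrow>
         (\<exists>h0. norm (h - h0) \<le> \<theta> \<and> norm (g - h0) \<le> (1 + \<theta>) * norm (g + h0)))"
    by blast
qed

(* Property (au): the seminorm is a multiple of the distance to the subspace W provided by (au)
   for g; weakly null sequences approach W. *)
lemma au_controlled_of_property_au:
  fixes x :: "nat \<Rightarrow> 'a::real_normed_vector"
  assumes au: "property_au TYPE('a)" and x: "weakly_null x"
  shows "au_controlled x"
  unfolding au_controlled_def
proof (intro allI impI)
  fix \<theta> :: real and M :: real and g :: 'a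
  assume th: "0 < \<theta>" and g: "norm g = 1"
  obtain W :: "'a set" where W: "subspace W" "closed W" "finite_codim W"
    "\<And>w. w \<in> W \<Longrightarrow> norm (g - w) \<le> (1 + \<theta>) * norm (g + w)"
    using au th unfolding property_au_def by blast
  define p where "p h = (2/\<theta>) * infdist h W" for h
  have "seminorm p"
    unfolding p_def using th by (intro seminorm_const_mult seminorm_infdist W(1)) simp
  moreover have "(\<lambda>m. p (x m)) \<longlonglongrightarrow> 0"
    unfolding p_def by (rule tendsto_mult_right_zero[OF weakly_null_infdist[OF x W(2,1,3)]])
  moreover have "\<exists>h0. norm (h - h0) \<le> \<theta> \<and> norm (g - h0) \<le> (1 + \<theta>) * norm (g + h0)"
    if "p h \<le> 1" for h
  proof -
    have "infdist h W < \<theta>" using that th by (simp add: p_def field_simps)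
    moreover have "W \<noteq> {}" using subspace_0[OF W(1)] by blast
    ultimately obtain w where "w \<in> W" "dist h w < \<theta>"
      using infdist_less_obtain by metis
    thus ?thesis using W(4) by (intro exI[of _ w]) (auto simp: dist_norm)
  qed
  ultimately show "\<exists>p. seminorm p \<and> (\<lambda>m. p (x m)) \<longlonglongrightarrow> 0 \<and> (\<forall>h. norm h \<le> M \<longrightarrow> p h \<le> 1 \<longrightarrow>
      (\<exists>h0. norm (h - h0) \<le> \<theta> \<and> norm (g - h0) \<le> (1 + \<theta>) * norm (g + h0)))"
    by blast
qed

(* Property au* with separability: if no seminorm n * sum_{i<n} |h (d i)| worked, the
   counterexamples would form a bounded weak*-null sequence violating property au*. *)
lemma au_controlled_of_property_au_star:
  fixes xs :: "nat \<Rightarrow> ('b::real_normed_vector \<Rightarrow>\<^sub>L real)"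
  assumes sep: "separable_type TYPE('b)" and au: "property_au_star TYPE('b)"
    and xs: "weak_star_null xs"
  shows "au_controlled xs"
  unfolding au_controlled_def
proof (intro allI impI)
  fix \<theta> :: real and M :: real and g :: "'b \<Rightarrow>\<^sub>L real"
  assume th: "0 < \<theta>" and g: "norm g = 1"
  obtain d :: "nat \<Rightarrow> 'b" where dense: "closure (range d) = UNIV"
    using separable_type_dense_seq[OF sep] by blast
  define p where "p n h = real n * (\<Sum>i<n. \<bar>blinfun_apply h (d i)\<bar>)" for n and h :: "'b \<Rightarrow>\<^sub>L real"
  have snp: "seminorm (p n)" for n
    unfolding p_def by (intro seminorm_const_mult seminorm_sum seminorm_abs_apply) auto
  have limp: "(\<lambda>m. p n (xs m)) \<longlonglongrightarrow> 0" for n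
    using xs unfolding p_def weak_star_null_def
    by (auto intro!: tendsto_null_sum tendsto_mult_right_zero tendsto_rabs_zero)
  have "\<exists>n. \<forall>h. norm h \<le> M \<longrightarrow> p n h \<le> 1 \<longrightarrow> norm (g - h) \<le> (1 + \<theta>) * norm (g + h)"
  proof (rule ccontr)
    assume "\<not> ?thesis"
    then obtain hs where hs: "\<And>n. norm (hs n) \<le> M" "\<And>n. p n (hs n) \<le> 1"
      "\<And>n. \<not> norm (g - hs n) \<le> (1 + \<theta>) * norm (g + hs n)"
      by metis
    have "weak_star_null hs"
      using hs(2) unfolding p_def by (rule weak_star_null_of_dense_sums[OF hs(1) dense])
    thus False using property_au_star_estimate[OF au _ g th] hs(3) by metis
  qed
  then obtain n where n: "\<forall>h. norm h \<le> M \<longrightarrow> p n h \<le> 1 \<longrightarrow> norm (g - h) \<le> (1 + \<theta>) * norm (g + h)"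
    by blast
  show "\<exists>p. seminorm p \<and> (\<lambda>m. p (xs m)) \<longlonglongrightarrow> 0 \<and> (\<forall>h. norm h \<le> M \<longrightarrow> p h \<le> 1 \<longrightarrow>
      (\<exists>h0. norm (h - h0) \<le> \<theta> \<and> norm (g - h0) \<le> (1 + \<theta>) * norm (g + h0)))"
  proof (intro exI[of _ "p n"] conjI allI impI snp limp)
    fix h assume "norm h \<le> M" "p n h \<le> 1"
    thus "\<exists>h0. norm (h - h0) \<le> \<theta> \<and> norm (g - h0) \<le> (1 + \<theta>) * norm (g + h0)"
      using n th by (intro exI[of _ h]) auto
  qed
qed

lemma au_estimate_perturb:
  fixes g t h h0 :: "'v::real_normed_vector"
  assumes th: "0 < \<theta>" "\<theta> \<le> 1" and nt: "norm t = 1"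
    and gt: "norm (g - t) \<le> \<theta>/24" and hh: "norm (h - h0) \<le> \<theta>/24"
    and est: "norm (t - h0) \<le> (1 + \<theta>/24) * norm (t + h0)"
  shows "norm (g - h) \<le> (1 + \<theta>) * norm (g + h)"
proof -
  define a where "a = norm (t + h0)"
  define b where "b = norm (t - h0)"
  have a0: "0 \<le> a" by (simp add: a_def)
  have two_t: "2 *\<^sub>R t = (t + h0) + (t - h0)" by (simp add: scaleR_2)
  have "norm (2 *\<^sub>R t) \<le> a + b" unfolding a_def b_def two_t by (rule norm_triangle_ineq)
  hence ab: "2 \<le> a + b" using nt by simp
  have b1: "b \<le> (1 + \<theta>/24) * a" using est by (simp add: a_def b_def)
  have "(\<theta>/24) * a \<le> 1 * a" using th a0 by (intro mult_right_mono) auto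
  hence a23: "a \<ge> 2/3" using ab b1 by (simp add: algebra_simps)
  have A: "norm (g + h) \<ge> a - \<theta>/12"
  proof -
    have "t + h0 = (g + h) - (g - t) - (h - h0)" by (simp add: algebra_simps)
    hence "a = norm ((g + h) - (g - t) - (h - h0))" unfolding a_def by simp
    hence "a \<le> norm (g + h) + norm (g - t) + norm (h - h0)"
      using norm_triangle_ineq4[of "g+h" "g-t"] norm_triangle_ineq4[of "(g+h)-(g-t)" "h-h0"] by linarith
    thus ?thesis using gt hh by simp
  qed
  have Bv: "norm (g - h) \<le> b + \<theta>/12"
  proof -
    have "g - h = (t - h0) + (g - t) - (h - h0)" by (simp add: algebra_simps)
    hence "norm (g - h) = norm (t - h0 + (g - t) - (h - h0))" by simp
    hence "norm (g - h) \<le> norm (t - h0) + norm (g - t) + norm (h - h0)"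
      using norm_triangle_ineq[of "t-h0" "g-t"] norm_triangle_ineq4[of "(t-h0)+(g-t)" "h-h0"] by linarith
    thus ?thesis using gt hh by (simp add: b_def)
  qed
  have k1: "\<theta> * a \<ge> \<theta> * (2/3)" using a23 th by (intro mult_left_mono) auto
  have k2: "(1+\<theta>) * norm (g + h) \<ge> (1+\<theta>) * (a - \<theta>/12)" using A th by (intro mult_left_mono) auto
  have tt: "\<theta> * \<theta> \<le> \<theta> * 1" using th by (intro mult_left_mono) auto
  have e1: "(1+\<theta>) * (a - \<theta>/12) = a + \<theta> * a - (\<theta> + \<theta> * \<theta>)/12" by (simp add: algebra_simps)
  have e2: "(1 + \<theta>/24) * a = a + (\<theta> * a)/24" by (simp add: algebra_simps)
  have e3: "\<theta> * (2/3) = 2*\<theta>/3" "\<theta> * 1 = \<theta>" by simp_all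
  show ?thesis using k1 k2 tt Bv b1 th unfolding e1 e2 e3 by argo
qed

(* Compactness makes the control uniform: one seminorm (a finite sum of those for a net of
   unit vectors) works for all g in a compact set of unit vectors. *)
lemma au_controlled_compact:
  fixes z :: "nat \<Rightarrow> 'v::real_normed_vector"
  assumes H: "au_controlled z" and K: "compact K" "\<And>g. g \<in> K \<Longrightarrow> norm g = 1"
    and th: "0 < \<theta>" "\<theta> \<le> 1"
  shows "\<exists>P. seminorm P \<and> (\<lambda>m. P (z m)) \<longlonglongrightarrow> 0 \<and>
     (\<forall>g\<in>K. \<forall>h. norm h \<le> M \<longrightarrow> P h \<le> 1 \<longrightarrow> norm (g - h) \<le> (1 + \<theta>) * norm (g + h))"
proof -
  define \<tau> where "\<tau> = \<theta>/24"
  have tau: "\<tau> > 0" using th by (simp add: \<tau>_def)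
  have "\<forall>g. \<exists>p. norm g = 1 \<longrightarrow> (seminorm p \<and> (\<lambda>m. p (z m)) \<longlonglongrightarrow> 0 \<and>
      (\<forall>h. norm h \<le> M \<longrightarrow> p h \<le> 1 \<longrightarrow>
        (\<exists>h0. norm (h - h0) \<le> \<tau> \<and> norm (g - h0) \<le> (1 + \<tau>) * norm (g + h0))))"
    using H tau unfolding au_controlled_def by blast
  then obtain pf where pf: "\<And>g. norm g = 1 \<Longrightarrow> seminorm (pf g) \<and> (\<lambda>m. pf g (z m)) \<longlonglongrightarrow> 0 \<and>
      (\<forall>h. norm h \<le> M \<longrightarrow> pf g h \<le> 1 \<longrightarrow>
        (\<exists>h0. norm (h - h0) \<le> \<tau> \<and> norm (g - h0) \<le> (1 + \<tau>) * norm (g + h0)))"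
    by metis
  obtain T where T: "T \<subseteq> K" "finite T" "K \<subseteq> (\<Union>t\<in>T. ball t \<tau>)"
    using compactE_image[OF K(1), of K "\<lambda>t. ball t \<tau>"] tau by force
  define P where "P h = (\<Sum>t\<in>T. pf t h)" for h
  have snP: "seminorm P" unfolding P_def
    by (rule seminorm_sum) (use T K pf in auto)
  have limP: "(\<lambda>m. P (z m)) \<longlonglongrightarrow> 0" unfolding P_def
    by (rule tendsto_null_sum) (use T K pf in auto)
  have "norm (g - h) \<le> (1 + \<theta>) * norm (g + h)"
    if g: "g \<in> K" and h: "norm h \<le> M" "P h \<le> 1" for g h
  proof -
    obtain t where t: "t \<in> T" "dist t g < \<tau>" using T g by auto
    have nt: "norm t = 1" using t T K by auto
    have "0 \<le> pf s h" if "s \<in> T" for s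
      using pf[of s] K(2) T(1) that seminorm_nonneg by blast
    hence "pf t h \<le> P h" unfolding P_def using t T by (intro member_le_sum) auto
    then obtain h0 where "norm (h - h0) \<le> \<tau>" "norm (t - h0) \<le> (1 + \<tau>) * norm (t + h0)"
      using pf[OF nt] h by force
    moreover have "norm (g - t) \<le> \<tau>" using t by (simp add: dist_norm norm_minus_commute)
    ultimately show ?thesis using au_estimate_perturb[OF th nt] by (simp add: \<tau>_def)
  qed
  thus ?thesis using snP limP by blast
qed

definition head :: "(nat \<Rightarrow> 'v::real_normed_vector) \<Rightarrow> (nat \<Rightarrow> real) \<Rightarrow> nat \<Rightarrow> 'v" where
  "head y b k = (\<Sum>i<k. b i *\<^sub>R y i)"

definition tail :: "(nat \<Rightarrow> 'v::real_normed_vector) \<Rightarrow> (nat \<Rightarrow> real) \<Rightarrow> nat \<Rightarrow> nat \<Rightarrow> 'v" where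
  "tail y b k n = (\<Sum>i\<in>{k..<n}. b i *\<^sub>R y i)"

definition split_bound ::
    "(nat \<Rightarrow> 'v::real_normed_vector) \<Rightarrow> (nat \<Rightarrow> real) \<Rightarrow> nat \<Rightarrow> nat \<Rightarrow> (nat \<Rightarrow> real) \<Rightarrow> bool" where
  "split_bound y \<theta> k n b \<longleftrightarrow> norm (head y b k - tail y b k n) \<le> (1 + \<theta> k) * norm (head y b n)"

(* Unit vectors spanned by the first k terms with coefficients bounded by B: the compact sets
   on which the seminorms must work uniformly. *)
definition unit_combos :: "(nat \<Rightarrow> 'v::real_normed_vector) \<Rightarrow> real \<Rightarrow> nat \<Rightarrow> 'v set" where
  "unit_combos y B k = {(\<Sum>i<k. a i *\<^sub>R y i) | a. \<forall>i<k. \<bar>a i\<bar> \<le> B} \<inter> {v. norm v = 1}"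

lemma compact_bounded_combos:
  fixes y :: "nat \<Rightarrow> 'v::real_normed_vector"
  shows "compact {(\<Sum>i<k. a i *\<^sub>R y i) | a. \<forall>i<k. \<bar>a i\<bar> \<le> B}"
proof (induction k)
  case 0
  have "{(\<Sum>i<0. a i *\<^sub>R y i) | a. \<forall>i<0. \<bar>a i\<bar> \<le> B} = {0::'v}" by auto
  then show ?case by simp
next
  case (Suc k)
  define A where "A = {(\<Sum>i<k. a i *\<^sub>R y i) | a. \<forall>i<k. \<bar>a i\<bar> \<le> B}"
  define L where "L = (\<lambda>t. t *\<^sub>R y k) ` {-B..B}"
  have cL: "compact L" unfolding L_def
    by (rule compact_continuous_image) (auto intro!: continuous_intros)
  have "{(\<Sum>i<Suc k. a i *\<^sub>R y i) | a. \<forall>i<Suc k. \<bar>a i\<bar> \<le> B} = {u + v | u v. u \<in> A \<and> v \<in> L}"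
  proof (intro set_eqI iffI)
    fix x assume "x \<in> {(\<Sum>i<Suc k. a i *\<^sub>R y i) | a. \<forall>i<Suc k. \<bar>a i\<bar> \<le> B}"
    then obtain a where x: "x = (\<Sum>i<Suc k. a i *\<^sub>R y i)" and a: "\<forall>i<Suc k. \<bar>a i\<bar> \<le> B" by blast
    have "(\<Sum>i<k. a i *\<^sub>R y i) \<in> A" using a unfolding A_def by auto
    moreover have "a k *\<^sub>R y k \<in> L" using a unfolding L_def
      by (intro image_eqI[of _ _ "a k"]) (auto simp: abs_le_iff)
    ultimately show "x \<in> {u + v | u v. u \<in> A \<and> v \<in> L}" using x by auto
  next
    fix x assume "x \<in> {u + v | u v. u \<in> A \<and> v \<in> L}"
    then obtain a t where x: "x = (\<Sum>i<k. a i *\<^sub>R y i) + t *\<^sub>R y k" and a: "\<forall>i<k. \<bar>a i\<bar> \<le> B"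
      and t: "t \<in> {-B..B}" unfolding A_def L_def by blast
    have "(\<Sum>i<k. (a(k := t)) i *\<^sub>R y i) = (\<Sum>i<k. a i *\<^sub>R y i)" by (rule sum.cong) auto
    hence "x = (\<Sum>i<Suc k. (a(k := t)) i *\<^sub>R y i)" using x by simp
    moreover have "\<forall>i<Suc k. \<bar>(a(k := t)) i\<bar> \<le> B" using a t by (auto simp: less_Suc_eq abs_le_iff)
    ultimately show "x \<in> {(\<Sum>i<Suc k. a i *\<^sub>R y i) | a. \<forall>i<Suc k. \<bar>a i\<bar> \<le> B}" by blast
  qed
  thus ?case using compact_sums[OF Suc[folded A_def] cL] by simp
qed

lemma compact_unit_combos: "compact (unit_combos y B k)"
  unfolding unit_combos_def
  by (intro compact_Int_closed compact_bounded_combos closed_Collect_eq continuous_intros)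

lemma unit_combos_norm: "g \<in> unit_combos y B k \<Longrightarrow> norm g = 1"
  by (simp add: unit_combos_def)

lemma unit_combos_cong: "(\<And>i. i < k \<Longrightarrow> y i = y' i) \<Longrightarrow> unit_combos y B k = unit_combos y' B k"
  unfolding unit_combos_def by (metis (no_types, lifting) lessThan_iff sum.cong)

lemma head_tail_split: "k \<le> n \<Longrightarrow> head y b n = head y b k + tail y b k n"
  unfolding head_def tail_def by (metis sum.atLeastLessThan_concat lessThan_atLeast0 zero_le)

lemma head_Suc: "head y b (Suc i) = head y b i + b i *\<^sub>R y i"
  by (simp add: head_def)

lemma geometric_sum_le_1: "(\<Sum>i\<in>{k..<n}. (1/2::real)^Suc i) \<le> 1"
proof -
  have "(\<Sum>i\<in>{k..<n}. (1/2::real)^Suc i) \<le> (\<Sum>i<n. (1/2)^Suc i)"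
    by (rule sum_mono2) auto
  also have "\<dots> = 1 - (1/2)^n" by (induction n) (auto simp: field_simps)
  finally show ?thesis using zero_le_power[of "1/2::real" n] by linarith
qed

lemma head_norm_le:
  assumes "split_bound y \<theta> k n b" "\<theta> k \<le> 1" "k \<le> n"
  shows "norm (head y b k) \<le> 2 * norm (head y b n)"
proof -
  have "2 *\<^sub>R head y b k = head y b n + (head y b k - tail y b k n)"
    using head_tail_split[OF assms(3), of y b] by (simp add: scaleR_2)
  hence "2 * norm (head y b k) \<le> norm (head y b n) + norm (head y b k - tail y b k n)"
    by (metis norm_triangle_ineq norm_scaleR abs_numeral)
  moreover have "(1 + \<theta> k) * norm (head y b n) \<le> 2 * norm (head y b n)"
    using assms(2) by (intro mult_right_mono) auto
  ultimately show ?thesis using assms(1) norm_ge_zero[of "head y b n"] unfolding split_bound_def by linarith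
qed

lemma coefficient_bound:
  assumes "norm (head y b i) \<le> 2 * N" "norm (head y b (Suc i)) \<le> 2 * N" "c \<le> norm (y i)"
  shows "\<bar>b i\<bar> * c \<le> 4 * N"
proof -
  have "\<bar>b i\<bar> * norm (y i) \<le> norm (head y b (Suc i)) + norm (head y b i)"
    using norm_triangle_ineq4[of "head y b (Suc i)" "head y b i"] by (simp add: head_Suc)
  moreover have "\<bar>b i\<bar> * c \<le> \<bar>b i\<bar> * norm (y i)" using assms(3) by (intro mult_left_mono) auto
  ultimately show ?thesis using assms(1,2) by linarith
qed

(* The key step for a single split: if the normalised head lies in K and the tail is small for the
   seminorm P (relative to its norm), the (1 + theta) estimate holds, either by the triangle
   inequality (large tail) or by the uniform guarantee after normalising (small tail). *)
lemma au_estimate_small_tail: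
  fixes g h :: "'v::real_normed_vector"
  assumes th: "0 < \<theta>" "\<theta> \<le> 1" and P: "seminorm P"
    and guar: "\<And>g' h'. g' \<in> K \<Longrightarrow> norm h' \<le> 3 / \<theta> \<Longrightarrow> P h' \<le> 1 \<Longrightarrow>
                 norm (g' - h') \<le> (1 + \<theta>) * norm (g' + h')"
    and gK: "g \<noteq> 0 \<Longrightarrow> (1 / norm g) *\<^sub>R g \<in> K"
    and Ph: "P h \<le> \<theta> * norm h / 3"
  shows "norm (g - h) \<le> (1 + \<theta>) * norm (g + h)"
proof (cases "g = 0")
  case True
  thus ?thesis using th by (simp add: mult_le_cancel_right1)
next
  case False
  define s where "s = norm g"
  have s0: "0 < s" using False by (simp add: s_def)
  show ?thesis
  proof (cases "3 * s \<le> \<theta> * norm h")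
    case True
    have "norm (g - h) \<le> s + norm h" using norm_triangle_ineq4[of g h] by (simp add: s_def)
    moreover have "norm h - s \<le> norm (g + h)" using norm_triangle_ineq4[of "g + h" g] by (simp add: s_def)
    moreover have "(1 + \<theta>) * (norm h - s) \<le> (1 + \<theta>) * norm (g + h)"
      using calculation(2) th by (intro mult_left_mono) auto
    moreover have "\<theta> * s \<le> 1 * s" using th s0 by (intro mult_right_mono) auto
    ultimately show ?thesis using True by (simp add: algebra_simps)
  next
    case False
    have "norm ((1/s) *\<^sub>R h) \<le> 3 / \<theta>" using False th s0 by (simp add: field_simps)
    moreover have "P ((1/s) *\<^sub>R h) \<le> 1"
    proof -
      have "P ((1/s) *\<^sub>R h) \<le> (1/s) * P h" using seminorm_scale[OF P, of "1/s" h] s0 by simp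
      also have "\<dots> \<le> (1/s) * (\<theta> * norm h / 3)" using Ph s0 by (intro mult_left_mono) auto
      also have "\<dots> \<le> 1" using False s0 by (simp add: field_simps)
      finally show ?thesis .
    qed
    ultimately have "norm ((1/s) *\<^sub>R g - (1/s) *\<^sub>R h) \<le> (1 + \<theta>) * norm ((1/s) *\<^sub>R g + (1/s) *\<^sub>R h)"
      using guar gK[OF \<open>g \<noteq> 0\<close>] by (simp add: s_def)
    hence "(1/s) * norm (g - h) \<le> (1/s) * ((1 + \<theta>) * norm (g + h))"
      using s0 by (simp add: scaleR_diff_right[symmetric] scaleR_add_right[symmetric])
    thus ?thesis using s0 by (simp add: divide_le_cancel)
  qed
qed

lemma tail_seminorm_bound:
  assumes P: "seminorm P" and th: "0 < \<theta>" and N: "0 \<le> N"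
    and small: "\<And>i. i \<in> {k..<n} \<Longrightarrow> P (y i) \<le> c * \<theta> / 12 * (1/2)^(Suc i)"
    and coef: "\<And>i. i \<in> {k..<n} \<Longrightarrow> \<bar>b i\<bar> * c \<le> 4 * N"
  shows "P (tail y b k n) \<le> \<theta> * N / 3"
proof -
  have "P (tail y b k n) \<le> (\<Sum>i\<in>{k..<n}. \<bar>b i\<bar> * P (y i))"
    unfolding tail_def by (rule seminorm_lincomb_le[OF P]) simp
  also have "\<dots> \<le> (\<Sum>i\<in>{k..<n}. (\<theta> * N / 3) * (1/2)^Suc i)"
  proof (rule sum_mono)
    fix i assume i: "i \<in> {k..<n}"
    have "\<bar>b i\<bar> * P (y i) \<le> (\<bar>b i\<bar> * c) * (\<theta> / 12 * (1/2)^(Suc i))"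
      using mult_left_mono[OF small[OF i], of "\<bar>b i\<bar>"] by (simp add: mult_ac)
    also have "\<dots> \<le> (4 * N) * (\<theta> / 12 * (1/2)^(Suc i))"
      using coef[OF i] th by (intro mult_right_mono) auto
    finally show "\<bar>b i\<bar> * P (y i) \<le> (\<theta> * N / 3) * (1/2)^Suc i" by (simp add: mult_ac)
  qed
  also have "\<dots> = (\<theta> * N / 3) * (\<Sum>i\<in>{k..<n}. (1/2)^Suc i)"
    by (simp add: sum_distrib_left)
  also have "\<dots> \<le> \<theta> * N / 3"
    using mult_left_mono[OF geometric_sum_le_1[of k n], of "\<theta> * N / 3"] th N by simp
  finally show ?thesis .
qed

lemma normalized_head_in_unit_combos:
  assumes c: "0 < c" and coef: "\<And>i. i < k \<Longrightarrow> \<bar>b i\<bar> * c \<le> 4 * norm (head y b k)"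
    and nz: "head y b k \<noteq> 0"
  shows "(1 / norm (head y b k)) *\<^sub>R head y b k \<in> unit_combos y (4/c) k"
proof -
  define s where "s = norm (head y b k)"
  have s0: "0 < s" using nz by (simp add: s_def)
  have "(1/s) *\<^sub>R head y b k = (\<Sum>i<k. (b i / s) *\<^sub>R y i)"
    by (simp add: head_def scaleR_sum_right)
  moreover have "\<bar>b i / s\<bar> \<le> 4/c" if "i < k" for i
    using coef[OF that] s0 c by (simp add: s_def field_simps abs_divide)
  moreover have "norm ((1/s) *\<^sub>R head y b k) = 1" using s0 by (simp add: s_def)
  ultimately show ?thesis unfolding unit_combos_def s_def[symmetric] by auto
qed

lemma head_coefficient_bound:
  assumes c: "\<And>i. c \<le> norm (y i)" and th: "\<And>k. \<theta> k \<le> 1"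
    and shorter: "\<And>j. j \<le> k \<Longrightarrow> split_bound y \<theta> j k b" and i: "i < k"
  shows "\<bar>b i\<bar> * c \<le> 4 * norm (head y b k)"
proof -
  have head_le: "norm (head y b j) \<le> 2 * norm (head y b k)" if "j \<le> k" for j
    using head_norm_le[OF shorter[OF that] th that] .
  show ?thesis using coefficient_bound[OF head_le[of i] head_le[of "Suc i"] c[of i]] i by simp
qed

(* The coefficients of the tail from k to n are bounded by its norm once the later splitting
   points of sums of length n satisfy the split estimates: apply them to the sum with the
   first k coefficients erased. *)
lemma tail_coefficient_bound:
  assumes c: "\<And>i. c \<le> norm (y i)" and th: "\<And>k. \<theta> k \<le> 1"
    and later: "\<And>j b'. k < j \<Longrightarrow> j \<le> n \<Longrightarrow> split_bound y \<theta> j n b'" and i: "i \<in> {k..<n}"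
  shows "\<bar>b i\<bar> * c \<le> 4 * norm (tail y b k n)"
proof -
  define b' where "b' i = (if k \<le> i then b i else 0)" for i
  have head_b': "head y b' j = tail y b k j" if "k \<le> j" for j
  proof -
    have "head y b' j = head y b' k + tail y b' k j" using head_tail_split[OF that] .
    thus ?thesis by (simp add: head_def tail_def b'_def)
  qed
  have tail_le: "norm (head y b' j) \<le> 2 * norm (tail y b k n)" if "k \<le> j" "j \<le> n" for j
  proof (cases "j = k")
    case True
    thus ?thesis by (simp add: head_b' tail_def)
  next
    case False
    with that have "split_bound y \<theta> j n b'" by (intro later) auto
    from head_norm_le[OF this th that(2)] show ?thesis using head_b'[of n] i by simp
  qed
  have "\<bar>b' i\<bar> * c \<le> 4 * norm (tail y b k n)"
    using coefficient_bound[OF tail_le[of i] tail_le[of "Suc i"] c[of i]] i by simp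
  thus ?thesis using i by (simp add: b'_def)
qed

(* One split estimate, given the estimates for shorter sums and for later splitting points:
   the coefficient bounds put the normalised head into the compact set and make the tail
   small for the seminorm P k. *)
lemma split_bound_step:
  fixes y :: "nat \<Rightarrow> 'v::real_normed_vector"
  assumes c: "0 < c" "\<And>i. c \<le> norm (y i)"
    and th: "\<And>k. 0 < \<theta> k" "\<And>k. \<theta> k \<le> 1"
    and P: "\<And>k. seminorm (P k)"
    and guar: "\<And>k g h. g \<in> unit_combos y (4/c) k \<Longrightarrow> norm h \<le> 3 / \<theta> k \<Longrightarrow> P k h \<le> 1 \<Longrightarrow>
                 norm (g - h) \<le> (1 + \<theta> k) * norm (g + h)"
    and small: "\<And>j i. j \<le> i \<Longrightarrow> P j (y i) \<le> c * \<theta> j / 12 * (1/2)^(Suc i)"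
    and kn: "k \<le> n"
    and shorter: "\<And>j. j \<le> k \<Longrightarrow> split_bound y \<theta> j k b"
    and later: "\<And>j b'. k < j \<Longrightarrow> j \<le> n \<Longrightarrow> split_bound y \<theta> j n b'"
  shows "split_bound y \<theta> k n b"
proof -
  have "norm (head y b k - tail y b k n) \<le> (1 + \<theta> k) * norm (head y b k + tail y b k n)"
  proof (rule au_estimate_small_tail[OF th(1,2) P guar])
    show "(1 / norm (head y b k)) *\<^sub>R head y b k \<in> unit_combos y (4/c) k"
      if "head y b k \<noteq> 0"
      using normalized_head_in_unit_combos[OF c(1) head_coefficient_bound[OF c(2) th(2) shorter]]
        that by blast
    have "P k (y i) \<le> c * \<theta> k / 12 * (1/2)^(Suc i)" if "i \<in> {k..<n}" for i
      using small that by simp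
    thus "P k (tail y b k n) \<le> \<theta> k * norm (tail y b k n) / 3"
      by (rule tail_seminorm_bound[OF P th(1) norm_ge_zero _ tail_coefficient_bound[OF c(2) th(2) later]])
  qed
  thus ?thesis using head_tail_split[OF kn, of y b] by (simp add: split_bound_def)
qed

(* All split estimates hold, by induction on the length n and, for fixed n, downward on the
   splitting point k. *)
lemma split_bound_all:
  fixes y :: "nat \<Rightarrow> 'v::real_normed_vector"
  assumes c: "0 < c" "\<And>i. c \<le> norm (y i)"
    and th: "\<And>k. 0 < \<theta> k" "\<And>k. \<theta> k \<le> 1"
    and P: "\<And>k. seminorm (P k)"
    and guar: "\<And>k g h. g \<in> unit_combos y (4/c) k \<Longrightarrow> norm h \<le> 3 / \<theta> k \<Longrightarrow> P k h \<le> 1 \<Longrightarrow>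
                 norm (g - h) \<le> (1 + \<theta> k) * norm (g + h)"
    and small: "\<And>j i. j \<le> i \<Longrightarrow> P j (y i) \<le> c * \<theta> j / 12 * (1/2)^(Suc i)"
  shows "k \<le> n \<Longrightarrow> split_bound y \<theta> k n b"
proof (induction n arbitrary: k b rule: less_induct)
  case (less n)
  have "\<forall>k b. k \<le> n \<longrightarrow> n - k = d \<longrightarrow> split_bound y \<theta> k n b" for d
  proof (induction d rule: less_induct)
    case inner: (less d)
    show ?case
    proof (intro allI impI)
      fix k b assume kn: "k \<le> n" and d: "n - k = d"
      show "split_bound y \<theta> k n b"
      proof (cases "k = n")
        case True
        thus ?thesis using th(1)[of k] by (simp add: split_bound_def tail_def mult_le_cancel_right1)
      next
        case False
        show ?thesis
        proof (rule split_bound_step[OF c th P guar small kn])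
          show "split_bound y \<theta> j k b" if "j \<le> k" for j
            using less.IH[of k j b] False kn that by simp
          show "split_bound y \<theta> j n b'" if "k < j" "j \<le> n" for j b'
            using inner.IH[of "n - j"] that d by simp
        qed
      qed
    qed
  qed
  thus ?case using less.prems by blast
qed

(* signed_sum y e a m n uses the signs e 0, ..., e m on the first terms and keeps the sign e m
   on the rest; passing from m to m + 1 changes the sign of a tail at most once. *)
definition signed_sum ::
    "(nat \<Rightarrow> 'v::real_normed_vector) \<Rightarrow> (nat \<Rightarrow> real) \<Rightarrow> (nat \<Rightarrow> real) \<Rightarrow> nat \<Rightarrow> nat \<Rightarrow> 'v" where
  "signed_sum y \<epsilon> a m n = (\<Sum>j<n. (\<epsilon> (min j m) * a j) *\<^sub>R y j)"

(* Changing the sign pattern from step m to step m + 1 costs at most the factor 1 + theta (m + 1):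
   either nothing changes, or the tail from m + 1 on changes sign and a split estimate applies. *)
lemma signed_sum_step:
  fixes y :: "nat \<Rightarrow> 'v::real_normed_vector"
  assumes S: "\<And>k b. k \<le> n \<Longrightarrow> split_bound y \<theta> k n b" and th: "0 \<le> \<theta> (Suc m)"
    and eps: "\<forall>j. \<epsilon> j \<in> {-1, 1}"
  shows "norm (signed_sum y \<epsilon> a (Suc m) n) \<le> (1 + \<theta> (Suc m)) * norm (signed_sum y \<epsilon> a m n)"
proof (cases "Suc m \<le> n \<and> \<epsilon> (Suc m) \<noteq> \<epsilon> m")
  case True
  hence flip: "\<epsilon> (Suc m) = - \<epsilon> m" using eps[rule_format, of m] eps[rule_format, of "Suc m"] by auto
  define b where "b j = \<epsilon> (min j m) * a j" for j
  have "signed_sum y \<epsilon> a m n = head y b n" by (simp add: signed_sum_def head_def b_def)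
  moreover have "signed_sum y \<epsilon> a (Suc m) n = head y b (Suc m) - tail y b (Suc m) n"
  proof -
    have "signed_sum y \<epsilon> a (Suc m) n = head y (\<lambda>j. \<epsilon> (min j (Suc m)) * a j) n"
      by (simp add: signed_sum_def head_def)
    also have "\<dots> = head y (\<lambda>j. \<epsilon> (min j (Suc m)) * a j) (Suc m)
                   + tail y (\<lambda>j. \<epsilon> (min j (Suc m)) * a j) (Suc m) n"
      using True by (intro head_tail_split) simp
    also have "head y (\<lambda>j. \<epsilon> (min j (Suc m)) * a j) (Suc m) = head y b (Suc m)"
      unfolding head_def b_def by (rule sum.cong) (auto simp: min_def)
    also have "tail y (\<lambda>j. \<epsilon> (min j (Suc m)) * a j) (Suc m) n = tail y (\<lambda>j. \<epsilon> (Suc m) * a j) (Suc m) n"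
      unfolding tail_def by (rule sum.cong) (auto simp: min_def)
    also have "\<dots> = - tail y b (Suc m) n"
      unfolding tail_def b_def flip by (simp add: sum_negf[symmetric])
    finally show ?thesis by simp
  qed
  ultimately show ?thesis using S[of "Suc m" b] True by (simp add: split_bound_def)
next
  case False
  have "signed_sum y \<epsilon> a (Suc m) n = signed_sum y \<epsilon> a m n"
    unfolding signed_sum_def using False by (intro sum.cong) (auto simp: min_def le_Suc_eq)
  thus ?thesis using th by (simp add: mult_le_cancel_right1)
qed

lemma unconditional_from_split_bounds:
  fixes y :: "nat \<Rightarrow> 'v::real_normed_vector"
  assumes S: "\<And>k n b. k \<le> n \<Longrightarrow> split_bound y \<theta> k n b"
    and th: "\<And>k. 0 \<le> \<theta> k"
    and E: "1 \<le> E 0" "\<And>m. (1 + \<theta> (Suc m)) * E m \<le> E (Suc m)" "\<And>m. E m \<le> C"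
    and eps: "\<forall>j. \<epsilon> j \<in> {-1, 1::real}"
  shows "norm (\<Sum>j<n. (\<epsilon> j * a j) *\<^sub>R y j) \<le> C * norm (\<Sum>j<n. a j *\<^sub>R y j)"
proof -
  define N where "N = norm (\<Sum>j<n. a j *\<^sub>R y j)"
  have bound: "norm (signed_sum y \<epsilon> a m n) \<le> E m * N" for m
  proof (induction m)
    case 0
    have "\<bar>\<epsilon> 0\<bar> = 1" using eps[rule_format, of 0] by auto
    moreover have "signed_sum y \<epsilon> a 0 n = \<epsilon> 0 *\<^sub>R (\<Sum>j<n. a j *\<^sub>R y j)"
      by (simp add: signed_sum_def scaleR_sum_right)
    ultimately have "norm (signed_sum y \<epsilon> a 0 n) = N" by (simp add: N_def)
    thus ?case using E(1) by (simp add: N_def mult_le_cancel_right1)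
  next
    case (Suc m)
    have "norm (signed_sum y \<epsilon> a (Suc m) n) \<le> (1 + \<theta> (Suc m)) * norm (signed_sum y \<epsilon> a m n)"
      by (rule signed_sum_step[OF S th eps])
    also have "\<dots> \<le> (1 + \<theta> (Suc m)) * (E m * N)"
      using Suc th[of "Suc m"] by (intro mult_left_mono) auto
    also have "\<dots> \<le> E (Suc m) * N"
      using E(2)[of m] by (simp add: N_def mult.assoc[symmetric] mult_right_mono)
    finally show ?case .
  qed
  have "signed_sum y \<epsilon> a n n = (\<Sum>j<n. (\<epsilon> j * a j) *\<^sub>R y j)"
    unfolding signed_sum_def by (rule sum.cong) auto
  hence "norm (\<Sum>j<n. (\<epsilon> j * a j) *\<^sub>R y j) \<le> E n * N" using bound[of n] by simp
  also have "\<dots> \<le> C * N" using E(3)[of n] by (simp add: N_def mult_right_mono)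
  finally show ?thesis by (simp add: N_def)
qed

lemma unconditional_basic_mono:
  assumes "unconditional_basic C y" "C \<le> C'"
  shows "unconditional_basic C' y"
  unfolding unconditional_basic_def
proof (intro conjI allI impI)
  show "y n \<noteq> 0" for n using assms(1) by (simp add: unconditional_basic_def)
  fix n and a \<epsilon> :: "nat \<Rightarrow> real" assume "\<forall>j. \<epsilon> j \<in> {-1, 1}"
  hence "norm (\<Sum>j<n. (\<epsilon> j * a j) *\<^sub>R y j) \<le> C * norm (\<Sum>j<n. a j *\<^sub>R y j)"
    using assms(1) unfolding unconditional_basic_def by blast
  also have "\<dots> \<le> C' * norm (\<Sum>j<n. a j *\<^sub>R y j)" using assms(2) by (rule mult_right_mono) simp
  finally show "norm (\<Sum>j<n. (\<epsilon> j * a j) *\<^sub>R y j) \<le> C' * norm (\<Sum>j<n. a j *\<^sub>R y j)" .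
qed

lemma au_controlled_seminorm_choice:
  fixes z :: "nat \<Rightarrow> 'v::real_normed_vector"
  assumes H: "au_controlled z" and th: "\<And>j. 0 < \<theta> j" "\<And>j. \<theta> j \<le> 1"
  obtains P :: "'v set \<Rightarrow> nat \<Rightarrow> 'v \<Rightarrow> real" where
    "\<And>y B k j. seminorm (P (unit_combos y B k) j)"
    "\<And>y B k j. (\<lambda>m. P (unit_combos y B k) j (z m)) \<longlonglongrightarrow> 0"
    "\<And>y B k j g h. g \<in> unit_combos y B k \<Longrightarrow> norm h \<le> 3 / \<theta> j \<Longrightarrow>
       P (unit_combos y B k) j h \<le> 1 \<Longrightarrow> norm (g - h) \<le> (1 + \<theta> j) * norm (g + h)"
proof -
  define P where "P K j = (SOME P. seminorm P \<and> (\<lambda>m. P (z m)) \<longlonglongrightarrow> 0 \<and>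
     (\<forall>g\<in>K. \<forall>h. norm h \<le> 3 / \<theta> j \<longrightarrow> P h \<le> 1 \<longrightarrow> norm (g - h) \<le> (1 + \<theta> j) * norm (g + h)))"
    for K :: "'v set" and j
  have spec: "seminorm (P K j) \<and> (\<lambda>m. P K j (z m)) \<longlonglongrightarrow> 0 \<and>
     (\<forall>g\<in>K. \<forall>h. norm h \<le> 3 / \<theta> j \<longrightarrow> P K j h \<le> 1 \<longrightarrow> norm (g - h) \<le> (1 + \<theta> j) * norm (g + h))"
    if "compact K" "\<And>g. g \<in> K \<Longrightarrow> norm g = 1" for K j
    unfolding P_def by (rule someI_ex[OF au_controlled_compact[OF H that th]])
  have "seminorm (P (unit_combos y B k) j) \<and> (\<lambda>m. P (unit_combos y B k) j (z m)) \<longlonglongrightarrow> 0 \<and>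
     (\<forall>g\<in>unit_combos y B k. \<forall>h. norm h \<le> 3 / \<theta> j \<longrightarrow> P (unit_combos y B k) j h \<le> 1 \<longrightarrow>
        norm (g - h) \<le> (1 + \<theta> j) * norm (g + h))" for y B k j
    by (rule spec[OF compact_unit_combos]) (rule unit_combos_norm)
  thus ?thesis using that[of P] by blast
qed

lemma diagonal_subsequence:
  fixes Q :: "(nat \<Rightarrow> nat) \<Rightarrow> nat \<Rightarrow> nat \<Rightarrow> real" and bnd :: "nat \<Rightarrow> nat \<Rightarrow> real"
  assumes prefix: "\<And>f f' j. (\<And>i. i < j \<Longrightarrow> f i = f' i) \<Longrightarrow> Q f j = Q f' j"
    and lim: "\<And>f j. Q f j \<longlonglongrightarrow> 0" and pos: "\<And>j k. 0 < bnd j k"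
  obtains r where "strict_mono r" "\<And>j k. j \<le> k \<Longrightarrow> Q r j (r k) \<le> bnd j k"
proof -
  define good where "good k f m \<longleftrightarrow> (\<forall>j<k. f j < m) \<and> (\<forall>j\<le>k. Q f j m \<le> bnd j k)" for k f m
  have "\<exists>m. good k f m" for k f
  proof -
    have e1: "eventually (\<lambda>m. \<forall>j\<in>{..<k}. f j < m) sequentially"
      by (rule eventually_ball_finite) (auto intro: eventually_gt_at_top)
    have e2: "eventually (\<lambda>m. \<forall>j\<in>{..k}. Q f j m \<le> bnd j k) sequentially"
    proof (rule eventually_ball_finite, simp, rule ballI)
      fix j
      have "eventually (\<lambda>m. dist (Q f j m) 0 < bnd j k) sequentially"
        using lim pos by (rule tendstoD)
      thus "eventually (\<lambda>m. Q f j m \<le> bnd j k) sequentially"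
        by (rule eventually_mono) auto
    qed
    obtain m where "\<forall>j\<in>{..<k}. f j < m" "\<forall>j\<in>{..k}. Q f j m \<le> bnd j k"
      using eventually_happens'[OF _ eventually_conj[OF e1 e2]] by auto
    thus ?thesis unfolding good_def by auto
  qed
  hence next_good: "good k f (LEAST m. good k f m)" for k f by (rule LeastI_ex)
  \<comment> \<open>R k records the first k chosen indices; each step adds the least good next index.\<close>
  define R where "R = rec_nat (\<lambda>_. 0::nat) (\<lambda>k Rk. Rk(k := LEAST m. good k Rk m))"
  define r where "r k = R (Suc k) k" for k
  have R_Suc: "R (Suc k) = (R k)(k := LEAST m. good k (R k) m)" for k by (simp add: R_def)
  have R_r: "R m j = r j" if "j < m" for m j
    using that by (induction m) (auto simp: R_Suc r_def less_Suc_eq)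
  have "good k (R k) (r k)" for k using next_good by (simp add: r_def R_Suc)
  moreover have "Q (R k) j = Q r j" if "j \<le> k" for k j
    using that R_r by (intro prefix) simp
  ultimately have good_r: "(\<forall>j<k. r j < r k) \<and> (\<forall>j\<le>k. Q r j (r k) \<le> bnd j k)" for k
    unfolding good_def using R_r by auto
  have "strict_mono r" unfolding strict_mono_def using good_r by blast
  thus ?thesis using that good_r by blast
qed

lemma tempering_constants:
  assumes \<delta>: "0 < \<delta>" "\<delta> \<le> 1"
  obtains \<theta> E :: "nat \<Rightarrow> real" where "\<And>k. 0 < \<theta> k" "\<And>k. \<theta> k \<le> 1" "1 \<le> E 0"
    "\<And>m. (1 + \<theta> (Suc m)) * E m \<le> E (Suc m)" "\<And>m. E m \<le> 1 + \<delta>"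
proof -
  define D where "D k = 1 + \<delta> * (1 - (1/2::real)^k)" for k
  define \<theta> where "\<theta> k = (D (Suc k) - D k) / D k" for k
  have D1: "1 \<le> D k" for k
    using \<delta> mult_left_mono[OF power_le_one[of "1/2::real" k], of \<delta>] by (simp add: D_def)
  have Ddiff: "D (Suc k) - D k = \<delta> * (1/2)^k / 2" for k by (simp add: D_def algebra_simps)
  have "0 < \<theta> k" for k
  proof -
    have num: "0 < \<delta> * (1/2)^k / 2" using \<delta> by simp
    show ?thesis using divide_pos_pos[OF num, of "D k"] D1[of k] by (simp add: \<theta>_def Ddiff)
  qed
  moreover have "\<theta> k \<le> 1" for k
  proof -
    have "0 \<le> D (Suc k) - D k" unfolding Ddiff using \<delta> by simp
    hence "\<theta> k \<le> (D (Suc k) - D k) / 1"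
      unfolding \<theta>_def using D1[of k] by (intro divide_left_mono) auto
    also have "\<dots> \<le> 1" unfolding Ddiff
      using \<delta> mult_mono[OF \<delta>(2) power_le_one[of "1/2::real" k]] by simp
    finally show ?thesis .
  qed
  moreover have "(1 + \<theta> (Suc m)) * D (Suc m) = D (Suc (Suc m))" for m
    using D1[of "Suc m"] by (simp add: \<theta>_def field_simps)
  moreover have "D (Suc m) \<le> 1 + \<delta>" for m using \<delta> by (simp add: D_def)
  ultimately show ?thesis using that[of \<theta> "\<lambda>m. D (Suc m)"] D1 by simp
qed

lemma unconditional_subsequence_bounded_below:
  fixes z :: "nat \<Rightarrow> 'v::real_normed_vector"
  assumes H: "au_controlled z" and c: "0 < c" "\<And>n. c \<le> norm (z n)" and \<delta>: "0 < \<delta>" "\<delta> \<le> 1"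
  shows "\<exists>r. strict_mono r \<and> unconditional_basic (1 + \<delta>) (z \<circ> r)"
proof -
  obtain \<theta> E where th: "\<And>k. 0 < \<theta> k" "\<And>k. \<theta> k \<le> 1"
    and E: "1 \<le> E 0" "\<And>m. (1 + \<theta> (Suc m)) * E m \<le> E (Suc m)" "\<And>m. E m \<le> 1 + \<delta>"
    using tempering_constants[OF \<delta>] by blast
  obtain PP where PP: "\<And>y B k j. seminorm (PP (unit_combos y B k) j)"
    "\<And>y B k j. (\<lambda>m. PP (unit_combos y B k) j (z m)) \<longlonglongrightarrow> 0"
    "\<And>y B k j g h. g \<in> unit_combos y B k \<Longrightarrow> norm h \<le> 3 / \<theta> j \<Longrightarrow>
       PP (unit_combos y B k) j h \<le> 1 \<Longrightarrow> norm (g - h) \<le> (1 + \<theta> j) * norm (g + h)"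
    using au_controlled_seminorm_choice[where \<theta> = \<theta>, OF H th] by blast
  define Q where "Q f j m = PP (unit_combos (z \<circ> f) (4/c) j) j (z m)" for f j m
  have prefix: "Q f j = Q f' j" if "\<And>i. i < j \<Longrightarrow> f i = f' i" for f f' j
    unfolding Q_def using unit_combos_cong[of j "z \<circ> f" "z \<circ> f'"] that by simp
  have lim: "Q f j \<longlonglongrightarrow> 0" for f j
    unfolding Q_def by (rule PP(2))
  have pos: "0 < c * \<theta> j / 12 * (1/2)^(Suc k)" for j k using c th by simp
  obtain r where r: "strict_mono r"
    "\<And>j k. j \<le> k \<Longrightarrow> Q r j (r k) \<le> c * \<theta> j / 12 * (1/2)^(Suc k)"
    using diagonal_subsequence[where Q = Q and bnd = "\<lambda>j k. c * \<theta> j / 12 * (1/2)^(Suc k)",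
      OF prefix lim pos] by blast
  define y where "y = z \<circ> r"
  have split: "split_bound y \<theta> k n b" if "k \<le> n" for k n b
  proof (rule split_bound_all[OF c(1) _ th PP(1) PP(3) _ that])
    show "c \<le> norm (y i)" for i using c by (simp add: y_def)
    show "PP (unit_combos y (4/c) j) j (y i) \<le> c * \<theta> j / 12 * (1/2)^(Suc i)" if "j \<le> i" for j i
      using r(2)[OF that] by (simp add: Q_def y_def)
  qed
  have "unconditional_basic (1 + \<delta>) y"
    unfolding unconditional_basic_def
  proof (intro conjI allI impI)
    show "y n \<noteq> 0" for n using c(2)[of "r n"] c(1) by (auto simp: y_def)
    show "norm (\<Sum>j<n. (\<epsilon> j * a j) *\<^sub>R y j) \<le> (1 + \<delta>) * norm (\<Sum>j<n. a j *\<^sub>R y j)"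
      if "\<forall>j. \<epsilon> j \<in> {-1, 1}" for n a \<epsilon>
      using unconditional_from_split_bounds[OF split _ E that] th(1) less_imp_le by blast
  qed
  thus ?thesis using r(1) by (auto simp: y_def)
qed

lemma not_tendsto_zero_subseq:
  fixes z :: "nat \<Rightarrow> 'v::real_normed_vector"
  assumes "\<not> z \<longlonglongrightarrow> 0"
  obtains c and s :: "nat \<Rightarrow> nat" where "0 < c" "strict_mono s" "\<And>n. c \<le> norm (z (s n))"
proof -
  obtain c where c: "0 < c" "\<not> (\<exists>N. \<forall>n\<ge>N. norm (z n - 0) < c)"
    using assms[unfolded LIMSEQ_iff] by auto
  have "\<exists>n\<ge>N. c \<le> norm (z n)" for N
  proof -
    obtain n where "n \<ge> N" "\<not> norm (z n - 0) < c" using c(2) by blast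
    thus ?thesis by (intro exI[of _ n]) auto
  qed
  hence "infinite {n. c \<le> norm (z n)}"
    unfolding infinite_nat_iff_unbounded_le by simp
  then obtain s :: "nat \<Rightarrow> nat" where s: "strict_mono s" "\<forall>n. s n \<in> {n. c \<le> norm (z n)}"
    using infinite_enumerate by blast
  show ?thesis by (rule that[OF c(1) s(1)]) (use s(2) in simp)
qed

lemma unconditional_subsequence:
  fixes z :: "nat \<Rightarrow> 'v::real_normed_vector"
  assumes H: "au_controlled z" and nz: "\<not> z \<longlonglongrightarrow> 0" and \<delta>: "0 < \<delta>"
  shows "\<exists>r. strict_mono r \<and> unconditional_basic (1 + \<delta>) (z \<circ> r)"
proof -
  obtain c :: real and s :: "nat \<Rightarrow> nat"
    where c: "0 < c" and s: "strict_mono s" and cs: "\<And>n. c \<le> norm ((z \<circ> s) n)"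
    using not_tendsto_zero_subseq[OF nz] by auto
  obtain r where r: "strict_mono r" "unconditional_basic (1 + min \<delta> 1) (z \<circ> s \<circ> r)"
    using unconditional_subsequence_bounded_below[OF au_controlled_subseq[OF H s] c cs, of "min \<delta> 1"] \<delta>
    by (auto simp: comp_def)
  have "strict_mono (s \<circ> r)" using s r(1) by (rule strict_mono_o)
  moreover have "unconditional_basic (1 + \<delta>) (z \<circ> (s \<circ> r))"
    using unconditional_basic_mono[OF r(2)] by (simp add: comp_assoc)
  ultimately show ?thesis by blast
qed

theorem lemma2p5:
  fixes x :: "nat \<Rightarrow> 'a::banach"
    and xs :: "nat \<Rightarrow> ('b::banach \<Rightarrow>\<^sub>L real)"
  shows "(separable_type TYPE('a) \<and> property_au TYPE('a) \<and> weakly_null x \<and> \<not> (x \<longlonglongrightarrow> 0)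
            \<longrightarrow> (\<forall>\<delta>>0. \<exists>r. strict_mono r \<and> unconditional_basic (1 + \<delta>) (x \<circ> r)))
       \<and> (separable_type TYPE('b) \<and> property_au_star TYPE('b) \<and> weak_star_null xs \<and> \<not> (xs \<longlonglongrightarrow> 0)
            \<longrightarrow> (\<forall>\<delta>>0. \<exists>r. strict_mono r \<and> unconditional_basic (1 + \<delta>) (xs \<circ> r)))"
proof (intro conjI impI allI)
  fix \<delta> :: real
  assume A: "separable_type TYPE('a) \<and> property_au TYPE('a) \<and> weakly_null x \<and> \<not> (x \<longlonglongrightarrow> 0)" "0 < \<delta>"
  hence "au_controlled x" by (intro au_controlled_of_property_au) auto
  thus "\<exists>r. strict_mono r \<and> unconditional_basic (1 + \<delta>) (x \<circ> r)"
    by (rule unconditional_subsequence) (use A in auto)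
next
  fix \<delta> :: real
  assume A: "separable_type TYPE('b) \<and> property_au_star TYPE('b) \<and> weak_star_null xs \<and> \<not> (xs \<longlonglongrightarrow> 0)"
    "0 < \<delta>"
  hence "au_controlled xs" by (intro au_controlled_of_property_au_star) auto
  thus "\<exists>r. strict_mono r \<and> unconditional_basic (1 + \<delta>) (xs \<circ> r)"
    by (rule unconditional_subsequence) (use A in auto)
qed

end
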